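(* Let $\sigma_0\ge\sigma_1\ge\dots\ge\sigma_{r-1}>0$ with $\sum_{i=0}^{r-1}\sigma_i^2=1$ and $r\le\min(N_1,N_2)$ (with $\sigma_1:=0$ if $r=1$), let $|\sigma\rangle=\sum_{i=0}^{r-1}\sigma_i|ii\rangle\in\mathbb{C}^{N_1}\otimes\mathbb{C}^{N_2}$, let $\lambda\in[0,1]$ and $Q=(1-\lambda)\frac{\mathbb{I}_{N_1N_2}}{N_1N_2}+\lambda|\sigma\rangle\langle\sigma|$. Then $Q^{T_1}\ge0$ if and only if $\lambda\le\frac{1}{1+N_1N_2\sigma_0\sigma_1}$.
   Context: $Q^{T_1}$ denotes the partial transpose of $Q$ with respect to the first tensor factor in the computational basis: $(|a\rangle\langle b|\otimes|c\rangle\langle d|)^{T_1}=|b\rangle\langle a|\otimes|c\rangle\langle d|$, extended linearly. *)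

theory Defs
  imports "HOL-Analysis.Analysis" "HOL-Library.Complex_Order"
begin

text \<open>Operators on C^N1 (x) C^N2 are represented as functions on pairs of basis
  indices: the basis vector |a c> (a < N1, c < N2) is the pair (a, c), and
  M (a,c) (b,d) is the matrix entry <a c| M |b d>.\<close>

type_synonym bop = "nat \<times> nat \<Rightarrow> nat \<times> nat \<Rightarrow> complex"

definition basis_idx :: "nat \<Rightarrow> nat \<Rightarrow> (nat \<times> nat) set" where
  "basis_idx N1 N2 = {..<N1} \<times> {..<N2}"

definition psd :: "nat \<Rightarrow> nat \<Rightarrow> bop \<Rightarrow> bool" where
  "psd N1 N2 M \<longleftrightarrow>
     (\<forall>v :: nat \<times> nat \<Rightarrow> complex.
        0 \<le> (\<Sum>x\<in>basis_idx N1 N2. \<Sum>y\<in>basis_idx N1 N2. cnj (v x) * M x y * v y))"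

definition ptrans1 :: "bop \<Rightarrow> bop" where
  "ptrans1 M = (\<lambda>(a, c) (b, d). M (b, c) (a, d))"

definition sigma_ket :: "nat \<Rightarrow> (nat \<Rightarrow> real) \<Rightarrow> nat \<times> nat \<Rightarrow> complex" where
  "sigma_ket r \<sigma> = (\<lambda>(a, c). if a = c \<and> a < r then complex_of_real (\<sigma> a) else 0)"

definition Qop :: "nat \<Rightarrow> nat \<Rightarrow> nat \<Rightarrow> (nat \<Rightarrow> real) \<Rightarrow> real \<Rightarrow> bop" where
  "Qop N1 N2 r \<sigma> lam = (\<lambda>x y.
     complex_of_real ((1 - lam) / real (N1 * N2)) * (if x = y then 1 else 0)
     + complex_of_real lam * sigma_ket r \<sigma> x * cnj (sigma_ket r \<sigma> y))"

end

theory Submission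
  imports Defs
begin

text \<open>The quadratic form of \<open>Q\<^sup>T\<^sup>1\<close> at \<open>v\<close> is
  \<open>(1 - \<lambda>)/(N\<^sub>1N\<^sub>2) \<parallel>v\<parallel>\<^sup>2 + \<lambda> \<Sum>\<^sub>a\<^sub>c \<sigma>\<^sub>a \<sigma>\<^sub>c Re (v\<^sub>a\<^sub>c\<^sup>* v\<^sub>c\<^sub>a)\<close>, since the partial
  transpose turns \<open>|\<sigma>\<rangle>\<langle>\<sigma>|\<close> into a weighted swap. For \<open>a \<noteq> c\<close>,
  \<open>\<sigma>\<^sub>a \<sigma>\<^sub>c \<le> \<sigma>\<^sub>0 \<sigma>\<^sub>1\<close> and \<open>|Re (x\<^sup>* y)| \<le> (|x|\<^sup>2 + |y|\<^sup>2)/2\<close>, so the swap part is at least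
  \<open>-\<sigma>\<^sub>0 \<sigma>\<^sub>1 \<parallel>v\<parallel>\<^sup>2\<close>; the singlet \<open>|01\<rangle> - |10\<rangle>\<close> attains this bound. Hence
  \<open>Q\<^sup>T\<^sup>1 \<ge> 0\<close> iff \<open>\<lambda> \<sigma>\<^sub>0 \<sigma>\<^sub>1 \<le> (1 - \<lambda>)/(N\<^sub>1N\<^sub>2)\<close>, which rearranges to the claimed bound.\<close>

definition qform :: "nat \<Rightarrow> nat \<Rightarrow> bop \<Rightarrow> (nat \<times> nat \<Rightarrow> complex) \<Rightarrow> complex" where
  "qform N1 N2 M v = (\<Sum>x\<in>basis_idx N1 N2. \<Sum>y\<in>basis_idx N1 N2. cnj (v x) * M x y * v y)"

lemma psd_iff_qform_nonneg: "psd N1 N2 M \<longleftrightarrow> (\<forall>v. 0 \<le> qform N1 N2 M v)"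
  by (simp add: psd_def qform_def)

lemma finite_basis_idx [simp]: "finite (basis_idx N1 N2)"
  by (simp add: basis_idx_def)

lemma qform_add: "qform N1 N2 (\<lambda>x y. M x y + L x y) v = qform N1 N2 M v + qform N1 N2 L v"
  by (simp add: qform_def distrib_left distrib_right sum.distrib)

lemma qform_scale: "qform N1 N2 (\<lambda>x y. c * M x y) v = c * qform N1 N2 M v"
  by (simp add: qform_def sum_distrib_left mult_ac)

lemma qform_identity:
  "qform N1 N2 (\<lambda>x y. if x = y then 1 else 0) v = complex_of_real (\<Sum>x\<in>basis_idx N1 N2. (cmod (v x))\<^sup>2)"
  unfolding qform_def of_real_sum complex_norm_square
  by (simp add: if_distrib if_distribR sum.delta mult.commute cong: if_cong)

lemma ptrans1_projector:
  "ptrans1 (\<lambda>x y. sigma_ket r \<sigma> x * cnj (sigma_ket r \<sigma> y)) (a, c) y =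
     (if y = (c, a) \<and> a < r \<and> c < r then complex_of_real (\<sigma> a * \<sigma> c) else 0)"
  by (cases y) (auto simp: ptrans1_def sigma_ket_def)

lemma qform_ptrans1_projector:
  assumes "r \<le> min N1 N2"
  shows "qform N1 N2 (ptrans1 (\<lambda>x y. sigma_ket r \<sigma> x * cnj (sigma_ket r \<sigma> y))) v =
    (\<Sum>a<r. \<Sum>c<r. complex_of_real (\<sigma> a * \<sigma> c) * (cnj (v (a, c)) * v (c, a)))"
proof -
  have "qform N1 N2 (ptrans1 (\<lambda>x y. sigma_ket r \<sigma> x * cnj (sigma_ket r \<sigma> y))) v =
      (\<Sum>(a, c)\<in>basis_idx N1 N2. if a < r \<and> c < r
         then complex_of_real (\<sigma> a * \<sigma> c) * (cnj (v (a, c)) * v (c, a)) else 0)"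
    unfolding qform_def
  proof (intro sum.cong refl, clarify)
    fix a c
    have "(c, a) \<in> basis_idx N1 N2" if "a < r" "c < r"
      using that assms by (auto simp: basis_idx_def)
    then show "(\<Sum>y\<in>basis_idx N1 N2. cnj (v (a, c)) * ptrans1 (\<lambda>x y. sigma_ket r \<sigma> x * cnj (sigma_ket r \<sigma> y)) (a, c) y * v y) =
        (if a < r \<and> c < r then complex_of_real (\<sigma> a * \<sigma> c) * (cnj (v (a, c)) * v (c, a)) else 0)"
      by (simp add: ptrans1_projector if_distrib if_distribR sum.delta' cong: if_cong)
  qed
  also have "\<dots> = (\<Sum>(a, c)\<in>{..<r} \<times> {..<r}. complex_of_real (\<sigma> a * \<sigma> c) * (cnj (v (a, c)) * v (c, a)))"
    using assms by (intro sum.mono_neutral_cong_right) (auto simp: basis_idx_def split: if_splits)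
  finally show ?thesis by (simp add: sum.cartesian_product)
qed

lemma double_sum_swap_real:
  fixes w :: "nat \<Rightarrow> nat \<Rightarrow> real" and v :: "nat \<times> nat \<Rightarrow> complex"
  assumes "\<And>a c. w a c = w c a"
  shows "(\<Sum>a\<in>A. \<Sum>c\<in>A. complex_of_real (w a c) * (cnj (v (a, c)) * v (c, a))) =
    complex_of_real (\<Sum>a\<in>A. \<Sum>c\<in>A. w a c * Re (cnj (v (a, c)) * v (c, a)))"
    (is "?S = _")
proof -
  have "cnj ?S = (\<Sum>a\<in>A. \<Sum>c\<in>A. complex_of_real (w c a) * (cnj (v (c, a)) * v (a, c)))"
    using assms by (simp add: mult.commute)
  also have "\<dots> = ?S"
    by (rule sum.swap)
  finally have "?S \<in> \<real>"
    by (simp add: Reals_cnj_iff)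
  then have "?S = complex_of_real (Re ?S)"
    by (simp only: of_real_Re)
  also have "Re ?S = (\<Sum>a\<in>A. \<Sum>c\<in>A. w a c * Re (cnj (v (a, c)) * v (c, a)))"
    by simp
  finally show ?thesis .
qed

definition swap_form :: "nat \<Rightarrow> (nat \<Rightarrow> real) \<Rightarrow> (nat \<times> nat \<Rightarrow> complex) \<Rightarrow> real" where
  "swap_form r \<sigma> v = (\<Sum>a<r. \<Sum>c<r. \<sigma> a * \<sigma> c * Re (cnj (v (a, c)) * v (c, a)))"

lemma psd_ptrans1_Qop_iff:
  assumes "r \<le> min N1 N2"
  shows "psd N1 N2 (ptrans1 (Qop N1 N2 r \<sigma> lam)) \<longleftrightarrow>
    (\<forall>v. 0 \<le> (1 - lam) / real (N1 * N2) * (\<Sum>x\<in>basis_idx N1 N2. (cmod (v x))\<^sup>2) + lam * swap_form r \<sigma> v)"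
proof -
  have "ptrans1 (Qop N1 N2 r \<sigma> lam) = (\<lambda>x y.
      complex_of_real ((1 - lam) / real (N1 * N2)) * (if x = y then 1 else 0)
      + complex_of_real lam * ptrans1 (\<lambda>x y. sigma_ket r \<sigma> x * cnj (sigma_ket r \<sigma> y)) x y)"
    by (auto simp: fun_eq_iff ptrans1_def Qop_def)
  moreover have "(\<Sum>a<r. \<Sum>c<r. complex_of_real (\<sigma> a * \<sigma> c) * (cnj (v (a, c)) * v (c, a))) =
      complex_of_real (swap_form r \<sigma> v)" for v
    unfolding swap_form_def by (rule double_sum_swap_real) simp
  ultimately have "qform N1 N2 (ptrans1 (Qop N1 N2 r \<sigma> lam)) v = complex_of_real
      ((1 - lam) / real (N1 * N2) * (\<Sum>x\<in>basis_idx N1 N2. (cmod (v x))\<^sup>2) + lam * swap_form r \<sigma> v)" for v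
    by (simp only: qform_add qform_scale qform_identity qform_ptrans1_projector[OF assms]) simp
  then show ?thesis
    by (simp only: psd_iff_qform_nonneg less_eq_complex_def Re_complex_of_real Im_complex_of_real) simp
qed

lemma Re_cnj_mult_ge: "- ((cmod x)\<^sup>2 + (cmod y)\<^sup>2) / 2 \<le> Re (cnj x * y)"
proof -
  have "- (cmod x * cmod y) \<le> Re (cnj x * y)"
    using abs_Re_le_cmod[of "cnj x * y"] by (simp add: norm_mult abs_le_iff)
  moreover have "2 * (cmod x * cmod y) \<le> (cmod x)\<^sup>2 + (cmod y)\<^sup>2"
    using sum_squares_bound[of "cmod x" "cmod y"] by simp
  ultimately show ?thesis
    by (simp add: field_simps)
qed

lemma swap_form_ge:
  assumes nonneg: "\<And>a. a < r \<Longrightarrow> 0 \<le> \<sigma> a"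
    and offdiag: "\<And>a c. a < r \<Longrightarrow> c < r \<Longrightarrow> a \<noteq> c \<Longrightarrow> \<sigma> a * \<sigma> c \<le> K"
    and "0 \<le> K"
  shows "- K * (\<Sum>a<r. \<Sum>c<r. (cmod (v (a, c)))\<^sup>2) \<le> swap_form r \<sigma> v"
proof -
  define X where "X a c = (cmod (v (a, c)))\<^sup>2" for a c
  have term_ge: "- K * (X a c + X c a) / 2 \<le> \<sigma> a * \<sigma> c * Re (cnj (v (a, c)) * v (c, a))"
    if "a < r" "c < r" for a c
  proof (cases "a = c")
    case True
    have "Re (cnj (v (a, a)) * v (a, a)) = X a a"
      by (simp add: X_def cmod_power2 flip: power2_eq_square)
    with True have "\<sigma> a * \<sigma> c * Re (cnj (v (a, c)) * v (c, a)) = (\<sigma> a)\<^sup>2 * X a a"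
      by (simp add: power2_eq_square)
    moreover have "- K * (X a c + X c a) / 2 \<le> 0"
      using \<open>0 \<le> K\<close> by (simp add: X_def)
    moreover have "0 \<le> (\<sigma> a)\<^sup>2 * X a a"
      by (simp add: X_def)
    ultimately show ?thesis
      by linarith
  next
    case False
    have w: "0 \<le> \<sigma> a * \<sigma> c" "\<sigma> a * \<sigma> c \<le> K"
      using nonneg offdiag that False by simp_all
    have "- K * (X a c + X c a) / 2 = K * (- (X a c + X c a) / 2)"
      by (simp add: algebra_simps)
    also have "\<dots> \<le> \<sigma> a * \<sigma> c * (- (X a c + X c a) / 2)"
      using w by (intro mult_right_mono_neg) (simp_all add: X_def)
    also have "\<dots> \<le> \<sigma> a * \<sigma> c * Re (cnj (v (a, c)) * v (c, a))"
      using w Re_cnj_mult_ge by (intro mult_left_mono) (simp_all add: X_def)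
    finally show ?thesis .
  qed
  have "(\<Sum>a<r. \<Sum>c<r. - K * (X a c + X c a) / 2) =
      (\<Sum>a<r. \<Sum>c<r. - K / 2 * X a c) + (\<Sum>a<r. \<Sum>c<r. - K / 2 * X c a)"
    by (simp only: sum.distrib[symmetric]) (intro sum.cong refl; simp add: field_simps)
  also have "(\<Sum>a<r. \<Sum>c<r. - K / 2 * X c a) = (\<Sum>c<r. \<Sum>a<r. - K / 2 * X c a)"
    by (rule sum.swap)
  also have "(\<Sum>a<r. \<Sum>c<r. - K / 2 * X a c) + (\<Sum>c<r. \<Sum>a<r. - K / 2 * X c a) =
      - K * (\<Sum>a<r. \<Sum>c<r. X a c)"
    by (simp only: flip: sum_distrib_left)
  finally have "- K * (\<Sum>a<r. \<Sum>c<r. X a c) = (\<Sum>a<r. \<Sum>c<r. - K * (X a c + X c a) / 2)" ..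
  also have "\<dots> \<le> swap_form r \<sigma> v"
    unfolding swap_form_def using term_ge by (intro sum_mono) auto
  finally show ?thesis
    by (simp only: X_def)
qed

lemma psd_ptrans1_QopI:
  assumes "r \<le> min N1 N2" and "0 \<le> lam"
    and "\<And>a. a < r \<Longrightarrow> 0 \<le> \<sigma> a"
    and "\<And>a c. a < r \<Longrightarrow> c < r \<Longrightarrow> a \<noteq> c \<Longrightarrow> \<sigma> a * \<sigma> c \<le> K"
    and "0 \<le> K"
    and gap: "lam * K \<le> (1 - lam) / real (N1 * N2)"
  shows "psd N1 N2 (ptrans1 (Qop N1 N2 r \<sigma> lam))"
  unfolding psd_ptrans1_Qop_iff[OF assms(1)]
proof
  fix v :: "nat \<times> nat \<Rightarrow> complex"
  define V where "V = (\<Sum>x\<in>basis_idx N1 N2. (cmod (v x))\<^sup>2)"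
  have "(\<Sum>a<r. \<Sum>c<r. (cmod (v (a, c)))\<^sup>2) = (\<Sum>x\<in>{..<r} \<times> {..<r}. (cmod (v x))\<^sup>2)"
    by (simp add: sum.cartesian_product)
  also have "\<dots> \<le> V"
    unfolding V_def using assms(1) by (intro sum_mono2) (auto simp: basis_idx_def)
  finally have "(\<Sum>a<r. \<Sum>c<r. (cmod (v (a, c)))\<^sup>2) \<le> V" .
  then have "- K * V \<le> - K * (\<Sum>a<r. \<Sum>c<r. (cmod (v (a, c)))\<^sup>2)"
    using \<open>0 \<le> K\<close> by (simp add: mult_left_mono)
  also have "\<dots> \<le> swap_form r \<sigma> v"
    using assms(3-5) by (rule swap_form_ge)
  finally have "lam * (- K * V) \<le> lam * swap_form r \<sigma> v"
    using \<open>0 \<le> lam\<close> by (rule mult_left_mono)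
  moreover have "lam * K * V \<le> (1 - lam) / real (N1 * N2) * V"
    using gap by (rule mult_right_mono) (simp add: V_def sum_nonneg)
  ultimately show "0 \<le> (1 - lam) / real (N1 * N2) * (\<Sum>x\<in>basis_idx N1 N2. (cmod (v x))\<^sup>2) + lam * swap_form r \<sigma> v"
    unfolding V_def[symmetric] by (simp add: algebra_simps)
qed

text \<open>\<open>|01\<rangle> - |10\<rangle>\<close> is an eigenvector of the partially transposed projector for its least
  eigenvalue \<open>-\<sigma>\<^sub>0 \<sigma>\<^sub>1\<close>.\<close>

definition singlet :: "nat \<times> nat \<Rightarrow> complex" where
  "singlet x = (if x = (0, 1) then 1 else if x = (1, 0) then -1 else 0)"

lemma sum_cmod_singlet:
  assumes "(0, 1) \<in> A" "(1, 0) \<in> A" "finite A"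
  shows "(\<Sum>x\<in>A. (cmod (singlet x))\<^sup>2) = 2"
proof -
  have "(\<Sum>x\<in>A. (cmod (singlet x))\<^sup>2) = (\<Sum>x\<in>A. (if x = (0, 1) then 1 else 0) + (if x = (1, 0) then 1 else 0))"
    by (intro sum.cong) (auto simp: singlet_def)
  then show ?thesis
    using assms by (simp add: sum.distrib)
qed

lemma swap_form_singlet:
  assumes "2 \<le> r"
  shows "swap_form r \<sigma> singlet = - 2 * (\<sigma> 0 * \<sigma> 1)"
proof -
  have singlet_term: "\<sigma> a * \<sigma> c * Re (cnj (singlet (a, c)) * singlet (c, a)) =
      (if (a, c) = (0, 1) then - (\<sigma> 0 * \<sigma> 1) else 0) + (if (a, c) = (1, 0) then - (\<sigma> 0 * \<sigma> 1) else 0)"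
    for a c
    by (simp add: singlet_def)
  have "swap_form r \<sigma> singlet =
      (\<Sum>(a, c)\<in>{..<r} \<times> {..<r}. \<sigma> a * \<sigma> c * Re (cnj (singlet (a, c)) * singlet (c, a)))"
    unfolding swap_form_def by (rule sum.cartesian_product)
  also have "\<dots> = (\<Sum>x\<in>{..<r} \<times> {..<r}.
      (if x = (0, 1) then - (\<sigma> 0 * \<sigma> 1) else 0) + (if x = (1, 0) then - (\<sigma> 0 * \<sigma> 1) else 0))"
    by (intro sum.cong refl) (clarify, rule singlet_term)
  finally have "swap_form r \<sigma> singlet = \<dots>" .
  then show ?thesis
    using assms by (simp add: sum.distrib)
qed

lemma psd_ptrans1_QopD:
  assumes "2 \<le> r" "r \<le> min N1 N2" and "psd N1 N2 (ptrans1 (Qop N1 N2 r \<sigma> lam))"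
  shows "lam * (\<sigma> 0 * \<sigma> 1) \<le> (1 - lam) / real (N1 * N2)"
proof -
  define p where "p = (1 - lam) / real (N1 * N2)"
  have "(\<Sum>x\<in>basis_idx N1 N2. (cmod (singlet x))\<^sup>2) = 2"
    using assms(1,2) by (intro sum_cmod_singlet) (auto simp: basis_idx_def)
  moreover have "0 \<le> p * (\<Sum>x\<in>basis_idx N1 N2. (cmod (singlet x))\<^sup>2) + lam * swap_form r \<sigma> singlet"
    using assms(3) unfolding psd_ptrans1_Qop_iff[OF assms(2)] p_def by blast
  ultimately have "0 \<le> p * 2 - 2 * (lam * (\<sigma> 0 * \<sigma> 1))"
    by (simp add: swap_form_singlet[OF assms(1)])
  then show ?thesis
    unfolding p_def[symmetric] by linarith
qed

lemma distinct_prod_le_top_two: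
  fixes \<sigma> :: "nat \<Rightarrow> real"
  assumes mono: "\<And>i j. i \<le> j \<Longrightarrow> j < r \<Longrightarrow> \<sigma> j \<le> \<sigma> i"
    and nonneg: "\<And>i. i < r \<Longrightarrow> 0 \<le> \<sigma> i"
    and "a \<noteq> c" "a < r" "c < r"
  shows "\<sigma> a * \<sigma> c \<le> \<sigma> 0 * \<sigma> 1"
proof -
  have ordered: "\<sigma> x * \<sigma> y \<le> \<sigma> 0 * \<sigma> 1" if "x < y" "y < r" for x y
    using that by (intro mult_mono mono nonneg) auto
  consider "a < c" | "c < a"
    using \<open>a \<noteq> c\<close> by linarith
  then show ?thesis
    using ordered[of a c] ordered[of c a] assms(4,5) by cases (simp_all add: mult.commute)
qed

lemma psd_ptrans1_Qop_iff_gap: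
  assumes "r \<le> min N1 N2" and "1 \<le> r"
    and mono: "\<And>i j. i \<le> j \<Longrightarrow> j < r \<Longrightarrow> \<sigma> j \<le> \<sigma> i"
    and nonneg: "\<And>i. i < r \<Longrightarrow> 0 \<le> \<sigma> i"
    and "0 \<le> lam" and "lam \<le> 1"
  shows "psd N1 N2 (ptrans1 (Qop N1 N2 r \<sigma> lam)) \<longleftrightarrow>
    lam * (\<sigma> 0 * (if r = 1 then 0 else \<sigma> 1)) \<le> (1 - lam) / real (N1 * N2)"
proof
  assume psd: "psd N1 N2 (ptrans1 (Qop N1 N2 r \<sigma> lam))"
  show "lam * (\<sigma> 0 * (if r = 1 then 0 else \<sigma> 1)) \<le> (1 - lam) / real (N1 * N2)"
  proof (cases "r = 1")
    case True
    then show ?thesis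
      using \<open>lam \<le> 1\<close> by simp
  next
    case False
    then show ?thesis
      using psd_ptrans1_QopD[OF _ assms(1) psd] \<open>1 \<le> r\<close> by simp
  qed
next
  assume "lam * (\<sigma> 0 * (if r = 1 then 0 else \<sigma> 1)) \<le> (1 - lam) / real (N1 * N2)"
  moreover have "\<sigma> a * \<sigma> c \<le> \<sigma> 0 * (if r = 1 then 0 else \<sigma> 1)" if "a < r" "c < r" "a \<noteq> c" for a c
    using that distinct_prod_le_top_two[OF mono nonneg] by auto
  moreover have "0 \<le> \<sigma> 0 * (if r = 1 then 0 else \<sigma> 1)"
    using nonneg[of 0] nonneg[of 1] \<open>1 \<le> r\<close> by simp
  ultimately show "psd N1 N2 (ptrans1 (Qop N1 N2 r \<sigma> lam))"
    using assms(1) \<open>0 \<le> lam\<close> nonneg by (intro psd_ptrans1_QopI)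
qed

theorem lemma4:
  fixes N1 N2 r :: nat and \<sigma> :: "nat \<Rightarrow> real" and lam :: real
  assumes "r \<le> min N1 N2"
    and "\<And>i j. i \<le> j \<Longrightarrow> j < r \<Longrightarrow> \<sigma> j \<le> \<sigma> i"
    and "\<And>i. i < r \<Longrightarrow> \<sigma> i > 0"
    and "(\<Sum>i<r. (\<sigma> i)\<^sup>2) = 1"
    and "0 \<le> lam" and "lam \<le> 1"
  shows "psd N1 N2 (ptrans1 (Qop N1 N2 r \<sigma> lam)) \<longleftrightarrow>
         lam \<le> 1 / (1 + real (N1 * N2) * \<sigma> 0 * (if r = 1 then 0 else \<sigma> 1))"
proof -
  define K where "K = \<sigma> 0 * (if r = 1 then 0 else \<sigma> 1)"
  have "1 \<le> r"
    using assms(4) by (cases r) auto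
  have nonneg: "\<And>i. i < r \<Longrightarrow> 0 \<le> \<sigma> i"
    using assms(3) less_imp_le by blast
  have N_pos: "0 < real (N1 * N2)"
    using assms(1) \<open>1 \<le> r\<close> by simp
  have "0 < 1 + real (N1 * N2) * K"
    using N_pos nonneg[of 0] nonneg[of 1] \<open>1 \<le> r\<close> by (simp add: K_def add_pos_nonneg)
  with N_pos have "lam * K \<le> (1 - lam) / real (N1 * N2) \<longleftrightarrow> lam \<le> 1 / (1 + real (N1 * N2) * K)"
    by (simp add: field_simps)
  then show ?thesis
    using psd_ptrans1_Qop_iff_gap[OF assms(1) \<open>1 \<le> r\<close> assms(2) nonneg assms(5,6)]
    by (simp add: K_def mult.assoc)
qed

end
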